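(* Let $Z_1,\dots,Z_d$ be nonzero complex numbers with $|Z_1|\le\cdots\le|Z_d|$, not all of the same modulus, let $R=\min\{|Z_{i+1}|/|Z_i| : |Z_{i+1}|>|Z_i|\}$ and $I=\{i: 1\le i\le d-1,\ |Z_i|<|Z_{i+1}|\}\cup\{0,d\}$. Let $i_1<i_2$ be successive elements of $I$ (i.e. both in $I$ and no element of $I$ lies strictly between them), and let $i_1<l<i_2$. Then \[ |\sigma_{d-l}(Z)|\le\left(\binom{i_2-i_1}{i_2-l}+c'\right)|Z_{i_2}|^{i_2-l}\,|Z_{i_2+1}|\cdots|Z_d|, \] where $c'=\left(\binom{d}{l}-\binom{i_2-i_1}{i_2-l}\right)R^{-1}<2^dR^{-1}$.
   Context: $\sigma_k(Z)=\sum_{j_1<\dots<j_k}Z_{j_1}\cdots Z_{j_k}$ denotes the $k$-th elementary symmetric function of $Z=(Z_1,\dots,Z_d)$; an empty product equals $1$. *)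

theory Defs
  imports Complex_Main
begin

definition esym :: "nat \<Rightarrow> (nat \<Rightarrow> complex) \<Rightarrow> nat \<Rightarrow> complex" where
  "esym d Z k = (\<Sum>S | S \<subseteq> {1..d} \<and> card S = k. \<Prod>j\<in>S. Z j)"

definition jumpR :: "nat \<Rightarrow> (nat \<Rightarrow> complex) \<Rightarrow> real" where
  "jumpR d Z = Min {cmod (Z (Suc i)) / cmod (Z i) | i. 1 \<le> i \<and> i \<le> d - 1 \<and> cmod (Z i) < cmod (Z (Suc i))}"

definition jumpI :: "nat \<Rightarrow> (nat \<Rightarrow> complex) \<Rightarrow> nat set" where
  "jumpI d Z = {i. 1 \<le> i \<and> i \<le> d - 1 \<and> cmod (Z i) < cmod (Z (Suc i))} \<union> {0, d}"

end

theory Submission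
  imports Defs
begin

(* With a_j = |Z_j|, the triangle inequality bounds |sigma_(d-l)(Z)| by the sum of the products
   of a over the (d-l)-subsets S of {1..d}. The top set T = {l+1..d} maximises these products:
   a is constant, equal to a_(i2), on the block i1 < j <= i2 containing l, so trading the
   elements of S - T for those of T - S never decreases the product. A subset that does not lie
   between {i2+1..d} and {i1+1..d} contains an index <= i1 or misses one > i2; either way it
   crosses a jump of modulus and loses at least a factor R. There are C(i2-i1, i2-l) subsets in
   between, and prod_T a = a_(i2)^(i2-l) a_(i2+1) ... a_d. *)

lemma prod_le_prod_exchange:
  fixes a :: "'a \<Rightarrow> 'b::linordered_semidom"
  assumes fin: "finite S" "finite T" and card_eq: "card S = card T"
    and nonneg: "\<And>x. x \<in> S \<Longrightarrow> 0 \<le> a x"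
    and low: "\<And>x. x \<in> S - T \<Longrightarrow> a x \<le> m"
    and high: "\<And>y. y \<in> T - S \<Longrightarrow> m \<le> a y"
  shows "prod a S \<le> prod a T"
proof -
  have card_diff: "card (S - T) = card (T - S)"
    using fin card_eq by (simp add: card_Diff_subset_Int Int_commute)
  have "prod a (S - T) \<le> prod a (T - S)"
  proof (cases "S - T = {}")
    case True
    then have "T - S = {}" using card_diff fin by (metis card_0_eq card.empty finite_Diff)
    with True show ?thesis by simp
  next
    case False
    then have "0 \<le> m" using nonneg low by (meson DiffD1 all_not_in_conv order_trans)
    have "prod a (S - T) \<le> (\<Prod>_\<in>S - T. m)" by (rule prod_mono) (simp add: nonneg low)
    also have "\<dots> = (\<Prod>_\<in>T - S. m)" using card_diff by simp
    also have "\<dots> \<le> prod a (T - S)" by (rule prod_mono) (simp add: \<open>0 \<le> m\<close> high)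
    finally show ?thesis .
  qed
  then have "prod a (S \<inter> T) * prod a (S - T) \<le> prod a (S \<inter> T) * prod a (T - S)"
    by (rule mult_left_mono) (auto intro: prod_nonneg nonneg)
  then show ?thesis
    using prod.Int_Diff[OF fin(1), of a T] prod.Int_Diff[OF fin(2), of a S]
    by (simp add: Int_commute)
qed

lemma mult_prod_le_prod_exchange_low:
  fixes a :: "'a \<Rightarrow> 'b::linordered_semidom"
  assumes fin: "finite S" "finite T" and card_eq: "card S = card T"
    and nonneg: "\<And>x. x \<in> S \<Longrightarrow> 0 \<le> a x"
    and low: "\<And>x. x \<in> S - T \<Longrightarrow> a x \<le> m"
    and high: "\<And>y. y \<in> T - S \<Longrightarrow> m \<le> a y"
    and x0: "x0 \<in> S - T" and "0 \<le> c" and scaled_low: "c * a x0 \<le> m"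
  shows "c * prod a S \<le> prod a T"
proof -
  define a' where "a' = a(x0 := c * a x0)"
  have "prod a' S = c * a x0 * prod a' (S - {x0})"
    using prod.remove[OF fin(1), of x0 a'] x0 by (simp add: a'_def)
  also have "prod a' (S - {x0}) = prod a (S - {x0})"
    by (rule prod.cong) (auto simp: a'_def)
  finally have "prod a' S = c * prod a S"
    using prod.remove[OF fin(1), of x0 a] x0 by (simp add: mult.assoc)
  moreover have "prod a' T = prod a T"
    using x0 by (intro prod.cong) (auto simp: a'_def)
  moreover have "prod a' S \<le> prod a' T"
    using fin card_eq nonneg low high scaled_low \<open>0 \<le> c\<close> x0
    by (intro prod_le_prod_exchange[where m = m]) (auto simp: a'_def)
  ultimately show ?thesis by simp
qed

lemma mult_prod_le_prod_exchange_high: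
  fixes a :: "'a \<Rightarrow> 'b::linordered_field"
  assumes fin: "finite S" "finite T" and card_eq: "card S = card T"
    and nonneg: "\<And>x. x \<in> S \<Longrightarrow> 0 \<le> a x"
    and low: "\<And>x. x \<in> S - T \<Longrightarrow> a x \<le> m"
    and high: "\<And>y. y \<in> T - S \<Longrightarrow> m \<le> a y"
    and y0: "y0 \<in> T - S" and "0 < c" and scaled_high: "c * m \<le> a y0"
  shows "c * prod a S \<le> prod a T"
proof -
  define a' where "a' = a(y0 := a y0 / c)"
  have "prod a' T = a y0 / c * prod a' (T - {y0})"
    using prod.remove[OF fin(2), of y0 a'] y0 by (simp add: a'_def)
  also have "prod a' (T - {y0}) = prod a (T - {y0})"
    by (rule prod.cong) (auto simp: a'_def)
  finally have "prod a' T = prod a T / c"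
    using prod.remove[OF fin(2), of y0 a] y0 by simp
  moreover have "prod a' S = prod a S"
    using y0 by (intro prod.cong) (auto simp: a'_def)
  moreover have "prod a' S \<le> prod a' T"
    using fin card_eq nonneg low high scaled_high \<open>0 < c\<close> y0
    by (intro prod_le_prod_exchange[where m = m]) (auto simp: a'_def pos_le_divide_eq mult.commute)
  ultimately show ?thesis using \<open>0 < c\<close> by (simp add: pos_le_divide_eq mult.commute)
qed

lemma card_subsets_between:
  assumes "finite B" "finite H" "B \<inter> H = {}"
  shows "card {S. H \<subseteq> S \<and> S \<subseteq> H \<union> B \<and> card S = card H + k} = card B choose k"
    (is "card ?between = _")
proof -
  have "?between = (\<lambda>V. V \<union> H) ` {V. V \<subseteq> B \<and> card V = k}"
  proof (intro equalityI subsetI)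
    fix S assume S: "S \<in> ?between"
    then have "S = (S \<inter> B) \<union> H" by blast
    moreover have "card S = card (S \<inter> B) + card H"
      using assms S by (subst \<open>S = (S \<inter> B) \<union> H\<close>, intro card_Un_disjoint) auto
    ultimately show "S \<in> (\<lambda>V. V \<union> H) ` {V. V \<subseteq> B \<and> card V = k}"
      using S by (intro image_eqI[of _ _ "S \<inter> B"]) auto
  next
    fix S assume "S \<in> (\<lambda>V. V \<union> H) ` {V. V \<subseteq> B \<and> card V = k}"
    then obtain V where "V \<subseteq> B" "card V = k" "S = V \<union> H" by blast
    moreover have "finite V" "V \<inter> H = {}" using assms \<open>V \<subseteq> B\<close> finite_subset by blast+
    ultimately show "S \<in> ?between"
      using assms by (auto simp: card_Un_disjoint)
  qed
  moreover have "inj_on (\<lambda>V. V \<union> H) {V. V \<subseteq> B \<and> card V = k}"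
    using assms by (intro inj_onI) blast
  ultimately show ?thesis
    using n_subsets[OF assms(1)] by (simp add: card_image)
qed

lemma jumpI_le: "i \<in> jumpI d Z \<Longrightarrow> i \<le> d"
  by (auto simp: jumpI_def)

lemma jumpI_iff_jump:
  assumes "1 \<le> i" "i < d"
  shows "i \<in> jumpI d Z \<longleftrightarrow> cmod (Z i) < cmod (Z (Suc i))"
  using assms by (auto simp: jumpI_def)

definition jump_ratios :: "nat \<Rightarrow> (nat \<Rightarrow> complex) \<Rightarrow> real set" where
  "jump_ratios d Z =
     {cmod (Z (Suc i)) / cmod (Z i) | i. 1 \<le> i \<and> i \<le> d - 1 \<and> cmod (Z i) < cmod (Z (Suc i))}"

lemma jumpR_eq_Min: "jumpR d Z = Min (jump_ratios d Z)"
  by (simp add: jumpR_def jump_ratios_def)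

lemma finite_jump_ratios: "finite (jump_ratios d Z)"
proof -
  have "jump_ratios d Z \<subseteq> (\<lambda>i. cmod (Z (Suc i)) / cmod (Z i)) ` {1..d}"
    by (auto simp: jump_ratios_def)
  then show ?thesis by (rule finite_subset) simp
qed

lemma jump_ratio_mem:
  assumes "1 \<le> i" "i < d" "cmod (Z i) < cmod (Z (Suc i))"
  shows "cmod (Z (Suc i)) / cmod (Z i) \<in> jump_ratios d Z"
  using assms by (auto simp: jump_ratios_def)

locale sorted_moduli =
  fixes d :: nat and Z :: "nat \<Rightarrow> complex"
  assumes nonzero: "\<And>i. 1 \<le> i \<Longrightarrow> i \<le> d \<Longrightarrow> Z i \<noteq> 0"
    and sorted: "\<And>i j. 1 \<le> i \<Longrightarrow> i \<le> j \<Longrightarrow> j \<le> d \<Longrightarrow> cmod (Z i) \<le> cmod (Z j)"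
    and not_all_eq: "\<exists>i\<in>{1..d}. \<exists>j\<in>{1..d}. cmod (Z i) \<noteq> cmod (Z j)"
begin

abbreviation modulus_prod :: "nat set \<Rightarrow> real" where
  "modulus_prod S \<equiv> \<Prod>j\<in>S. cmod (Z j)"

lemma jumpR_mult_le:
  assumes "1 \<le> i" "i < d" "cmod (Z i) < cmod (Z (Suc i))"
  shows "jumpR d Z * cmod (Z i) \<le> cmod (Z (Suc i))"
proof -
  have "jumpR d Z \<le> cmod (Z (Suc i)) / cmod (Z i)"
    unfolding jumpR_eq_Min using finite_jump_ratios jump_ratio_mem[OF assms] by (rule Min_le)
  moreover have "0 < cmod (Z i)" using nonzero assms by simp
  ultimately show ?thesis by (simp add: pos_le_divide_eq)
qed

lemma exists_jump: "\<exists>i. 1 \<le> i \<and> i < d \<and> cmod (Z i) < cmod (Z (Suc i))"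
proof -
  obtain i j where ij: "i \<in> {1..d}" "j \<in> {1..d}" "cmod (Z i) \<noteq> cmod (Z j)"
    using not_all_eq by blast
  obtain p q where pq: "1 \<le> p" "p \<le> q" "q \<le> d" "cmod (Z p) < cmod (Z q)"
  proof (cases "i \<le> j")
    case True
    then have "cmod (Z i) < cmod (Z j)" using ij sorted[of i j] by simp
    then show ?thesis using ij True by (intro that[of i j]) auto
  next
    case False
    then have "cmod (Z j) < cmod (Z i)" using ij sorted[of j i] by simp
    then show ?thesis using ij False by (intro that[of j i]) auto
  qed
  show ?thesis
  proof (rule ccontr)
    assume no_jump: "\<not> ?thesis"
    have "cmod (Z (Suc k)) \<le> cmod (Z k)" if "k \<in> {p..<q}" for k
    proof -
      have "1 \<le> k" "k < d" using that pq by auto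
      then show ?thesis using no_jump not_less by blast
    qed
    then have "cmod (Z q) \<le> cmod (Z p)"
      using pq(2) by (rule lift_Suc_antimono_le_ivl[where N = "{p..<q}"]) simp_all
    with pq(4) show False by simp
  qed
qed

lemma jumpR_pos: "0 < jumpR d Z"
proof -
  obtain i where "1 \<le> i" "i < d" "cmod (Z i) < cmod (Z (Suc i))" using exists_jump by blast
  then have "jump_ratios d Z \<noteq> {}" using jump_ratio_mem by blast
  moreover have "\<forall>r \<in> jump_ratios d Z. 0 < r" using nonzero by (auto simp: jump_ratios_def)
  ultimately show ?thesis unfolding jumpR_eq_Min using finite_jump_ratios by simp
qed

end

locale successive_jumps = sorted_moduli +
  fixes i1 i2 :: nat
  assumes i1_jump: "i1 \<in> jumpI d Z" and i2_jump: "i2 \<in> jumpI d Z" and i1_less_i2: "i1 < i2"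
    and successive: "\<forall>i\<in>jumpI d Z. \<not> (i1 < i \<and> i < i2)"
begin

lemma i2_le_d: "i2 \<le> d"
  using i2_jump by (rule jumpI_le)

lemma modulus_eq_block:
  assumes "i1 < j" "j \<le> i2"
  shows "cmod (Z j) = cmod (Z i2)"
proof -
  have "cmod (Z (Suc k)) \<le> cmod (Z k)" if "k \<in> {j..<i2}" for k
  proof -
    have "1 \<le> k" "k < d" "k \<notin> jumpI d Z" using that assms successive i2_le_d by auto
    then show ?thesis using jumpI_iff_jump not_less by blast
  qed
  then have "cmod (Z i2) \<le> cmod (Z j)"
    using assms(2) by (rule lift_Suc_antimono_le_ivl[where N = "{j..<i2}"]) simp_all
  moreover have "cmod (Z j) \<le> cmod (Z i2)" using sorted[of j i2] assms i2_le_d by simp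
  ultimately show ?thesis by simp
qed

lemma block_le_modulus:
  assumes "i1 < y" "y \<le> d"
  shows "cmod (Z i2) \<le> cmod (Z y)"
proof (cases "y \<le> i2")
  case True
  then show ?thesis using modulus_eq_block[of y] assms by simp
next
  case False
  then show ?thesis using sorted[of i2 y] i1_less_i2 assms by simp
qed

lemma modulus_prod_le_top:
  assumes S: "S \<subseteq> {1..d}" "card S = d - l" and l: "i1 < l" "l < i2"
  shows "modulus_prod S \<le> modulus_prod {l+1..d}"
proof (rule prod_le_prod_exchange[where m = "cmod (Z i2)"])
  show "finite S" using S finite_subset by blast
  show "cmod (Z x) \<le> cmod (Z i2)" if "x \<in> S - {l+1..d}" for x
    using that S l i2_le_d sorted[of x i2] by auto
  show "cmod (Z i2) \<le> cmod (Z y)" if "y \<in> {l+1..d} - S" for y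
    using that l block_le_modulus by simp
qed (use S in simp_all)

lemma jumpR_mult_modulus_prod_le_top:
  assumes S: "S \<subseteq> {1..d}" "card S = d - l" and l: "i1 < l" "l < i2"
    and not_block: "\<not> ({i2+1..d} \<subseteq> S \<and> S \<subseteq> {i1+1..d})"
  shows "jumpR d Z * modulus_prod S \<le> modulus_prod {l+1..d}"
proof -
  have fin: "finite S" using S finite_subset by blast
  have card_eq: "card S = card {l+1..d}" using S by simp
  have low: "cmod (Z x) \<le> cmod (Z i2)" if "x \<in> S - {l+1..d}" for x
    using that S l i2_le_d sorted[of x i2] by auto
  have high: "cmod (Z i2) \<le> cmod (Z y)" if "y \<in> {l+1..d} - S" for y
    using that l block_le_modulus by simp
  from not_block consider x where "x \<in> S" "x \<notin> {i1+1..d}"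
    | y where "y \<in> {i2+1..d}" "y \<notin> S"
    by blast
  then show ?thesis
  proof cases
    case (1 x)
    have "1 \<le> x" "x \<le> i1" using 1 S by auto
    have "jumpR d Z * cmod (Z x) \<le> jumpR d Z * cmod (Z i1)"
      using sorted[of x i1] \<open>1 \<le> x\<close> \<open>x \<le> i1\<close> l i2_le_d jumpR_pos by simp
    also have "\<dots> \<le> cmod (Z (Suc i1))"
      using jumpR_mult_le[of i1] i1_jump jumpI_iff_jump[of i1] \<open>1 \<le> x\<close> \<open>x \<le> i1\<close> l i2_le_d by simp
    also have "\<dots> = cmod (Z i2)" using modulus_eq_block[of "Suc i1"] l by simp
    finally have scaled_low: "jumpR d Z * cmod (Z x) \<le> cmod (Z i2)" .
    have "x \<in> S - {l+1..d}" using 1 l by auto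
    from mult_prod_le_prod_exchange_low[where a = "\<lambda>j. cmod (Z j)",
        OF fin finite_atLeastAtMost card_eq norm_ge_zero low high this
        less_imp_le[OF jumpR_pos] scaled_low]
    show ?thesis .
  next
    case (2 y)
    have "i2 < y" "y \<le> d" using 2 by auto
    have "jumpR d Z * cmod (Z i2) \<le> cmod (Z (Suc i2))"
      using jumpR_mult_le[of i2] i2_jump jumpI_iff_jump[of i2] \<open>i2 < y\<close> \<open>y \<le> d\<close> i1_less_i2 by simp
    also have "\<dots> \<le> cmod (Z y)" using sorted[of "Suc i2" y] \<open>i2 < y\<close> \<open>y \<le> d\<close> by simp
    finally have scaled_high: "jumpR d Z * cmod (Z i2) \<le> cmod (Z y)" .
    have "y \<in> {l+1..d} - S" using 2 l by auto
    from mult_prod_le_prod_exchange_high[where a = "\<lambda>j. cmod (Z j)",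
        OF fin finite_atLeastAtMost card_eq norm_ge_zero low high this jumpR_pos scaled_high]
    show ?thesis .
  qed
qed

lemma modulus_prod_top:
  assumes "i1 < l" "l < i2"
  shows "modulus_prod {l+1..d} = cmod (Z i2) ^ (i2 - l) * modulus_prod {i2+1..d}"
proof -
  have "{l+1..d} = {l+1..i2} \<union> {i2+1..d}" using assms i2_le_d by auto
  then have "modulus_prod {l+1..d} = modulus_prod {l+1..i2} * modulus_prod {i2+1..d}"
    by (simp add: prod.union_disjoint ivl_disj_int)
  moreover have "modulus_prod {l+1..i2} = (\<Prod>_\<in>{l+1..i2}. cmod (Z i2))"
    using assms by (intro prod.cong refl modulus_eq_block) auto
  ultimately show ?thesis by simp
qed

lemma norm_esym_le_top:
  assumes l: "i1 < l" "l < i2"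
  defines "C \<equiv> (i2 - i1) choose (i2 - l)"
  shows "cmod (esym d Z (d - l))
           \<le> (real C + (real (d choose l) - real C) / jumpR d Z) * modulus_prod {l+1..d}"
proof -
  define A where "A = {S. S \<subseteq> {1..d} \<and> card S = d - l}"
  define G where
    "G = {S. {i2+1..d} \<subseteq> S \<and> S \<subseteq> {i2+1..d} \<union> {i1+1..i2}
             \<and> card S = card {i2+1..d} + (i2 - l)}"
  define M where "M = modulus_prod {l+1..d}"
  have block_union: "{i2+1..d} \<union> {i1+1..i2} = {i1+1..d}" using i1_less_i2 i2_le_d by auto
  have card_block: "card {i2+1..d} + (i2 - l) = d - l" using l i2_le_d by simp
  have G_eq: "G = {S. {i2+1..d} \<subseteq> S \<and> S \<subseteq> {i1+1..d} \<and> card S = d - l}"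
    unfolding G_def block_union card_block ..
  have "G \<subseteq> A" unfolding G_eq A_def by auto
  have fin_A: "finite A" unfolding A_def by (rule finite_subset[of _ "Pow {1..d}"]) auto
  have card_A: "card A = d choose l"
    unfolding A_def using n_subsets[of "{1..d}" "d - l"] l i2_le_d
    by (simp add: binomial_symmetric[symmetric])
  have card_G: "card G = C"
    unfolding G_def C_def by (subst card_subsets_between) auto
  have card_bad: "real (card (A - G)) = real (d choose l) - real C"
    using card_Diff_subset[OF finite_subset[OF \<open>G \<subseteq> A\<close> fin_A] \<open>G \<subseteq> A\<close>]
      card_mono[OF fin_A \<open>G \<subseteq> A\<close>] card_A card_G by simp
  have "cmod (esym d Z (d - l)) \<le> (\<Sum>S\<in>A. modulus_prod S)"
    unfolding esym_def A_def by (rule order.trans[OF norm_sum]) (simp add: prod_norm)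
  also have "\<dots> = (\<Sum>S\<in>G. modulus_prod S) + (\<Sum>S\<in>A - G. modulus_prod S)"
    using sum.subset_diff[OF \<open>G \<subseteq> A\<close> fin_A] by (simp add: add.commute)
  also have "\<dots> \<le> (\<Sum>S\<in>G. M) + (\<Sum>S\<in>A - G. M / jumpR d Z)"
  proof (intro add_mono sum_mono)
    show "modulus_prod S \<le> M" if "S \<in> G" for S
      using that \<open>G \<subseteq> A\<close> l unfolding M_def A_def by (intro modulus_prod_le_top) auto
    show "modulus_prod S \<le> M / jumpR d Z" if "S \<in> A - G" for S
    proof -
      have "jumpR d Z * modulus_prod S \<le> M"
        using that l unfolding M_def A_def G_eq by (intro jumpR_mult_modulus_prod_le_top) auto
      then show ?thesis using jumpR_pos by (simp add: pos_le_divide_eq mult.commute)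
    qed
  qed
  also have "\<dots> = real (card G) * M + real (card (A - G)) * (M / jumpR d Z)"
    by simp
  also have "\<dots> = (real C + (real (d choose l) - real C) / jumpR d Z) * M"
    unfolding card_G card_bad by (simp add: algebra_simps diff_divide_distrib)
  finally show ?thesis unfolding M_def .
qed

end

theorem mainTheorem4:
  fixes d :: nat and Z :: "nat \<Rightarrow> complex" and i1 i2 l :: nat
  assumes nz: "\<And>i. 1 \<le> i \<Longrightarrow> i \<le> d \<Longrightarrow> Z i \<noteq> 0"
    and sorted: "\<And>i j. 1 \<le> i \<Longrightarrow> i \<le> j \<Longrightarrow> j \<le> d \<Longrightarrow> cmod (Z i) \<le> cmod (Z j)"
    and not_all_eq: "\<exists>i\<in>{1..d}. \<exists>j\<in>{1..d}. cmod (Z i) \<noteq> cmod (Z j)"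
    and i1I: "i1 \<in> jumpI d Z" and i2I: "i2 \<in> jumpI d Z" and i12: "i1 < i2"
    and succ: "\<forall>i\<in>jumpI d Z. \<not> (i1 < i \<and> i < i2)"
    and l: "i1 < l" "l < i2"
  shows "cmod (esym d Z (d - l))
           \<le> (real ((i2 - i1) choose (i2 - l))
               + (real (d choose l) - real ((i2 - i1) choose (i2 - l))) / jumpR d Z)
             * cmod (Z i2) ^ (i2 - l) * (\<Prod>j\<in>{i2+1..d}. cmod (Z j))
         \<and> (real (d choose l) - real ((i2 - i1) choose (i2 - l))) / jumpR d Z < 2 ^ d / jumpR d Z"
proof -
  interpret successive_jumps d Z i1 i2
    using nz sorted not_all_eq i1I i2I i12 succ by unfold_locales
  have "real (d choose l) \<le> 2 ^ d"
    using binomial_le_pow2[of d l] by (metis of_nat_le_iff of_nat_numeral of_nat_power)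
  moreover have "0 < (i2 - i1) choose (i2 - l)" using l by simp
  ultimately have "real (d choose l) - real ((i2 - i1) choose (i2 - l)) < 2 ^ d" by linarith
  with jumpR_pos show ?thesis
    using norm_esym_le_top[OF l] unfolding modulus_prod_top[OF l]
    by (simp add: divide_strict_right_mono mult.assoc)
qed

end
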